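(* For $n\ge2$ and $1\le r\le n-1$ let $N(n,r)$ be the number of triples $(\alpha,\beta,\gamma)\in\mathbb{Z}_2^n\times\mathbb{Z}_2^n\times\mathbb{Z}_2^n$ with $\mathrm{adp}^{\mathrm{XR}}_r(\alpha,\beta\to\gamma)=0$. Then: (1) for $2\le r\le n-2$, $N(n,r)\le\left(\frac17+\frac{1}{2^{r+1}}\right)8^n-\frac17 8^r+\frac47(8^{r-1}-1)\left(\frac15 8^{n-r}+7\cdot4^{n-r}-\frac{124}{5}3^{n-r-2}\right)$; (2) $N(n,n-1)\le\left(\frac{9}{28}+\frac{1}{2^n}\right)8^n-\frac{88}{7}$; (3) $N(n,r)\ge\frac17 8^n-\frac17 8^r$ for every $1\le r\le n-1$; (4) $N(n,1)=\frac{5}{14}8^n-\frac67$ for every $n\ge2$.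
   Context: For $x\in\mathbb{Z}_2^n$, $x=(x_0,\dots,x_{n-1})$ is identified with the integer $\sum_i x_i2^{n-1-i}$; $+$ is addition modulo $2^n$, $\oplus$ is bitwise XOR, $x\lll r=(x_r,\dots,x_{n-1},x_0,\dots,x_{r-1})$. $\mathrm{adp}^{\mathrm{XR}}_r(\alpha,\beta\to\gamma)=4^{-n}\#\{(x,y)\in(\mathbb{Z}_2^n)^2: ((x+\alpha)\oplus(y+\beta))\lll r=((x\oplus y)\lll r)+\gamma\}$. *)

theory Defs
  imports Complex_Main
begin

text \<open>Elements of Z_2^n are represented as natural numbers x < 2^n, where the bit
  vector (x_0,...,x_{n-1}) corresponds to the integer sum_i x_i 2^(n-1-i), i.e. x_0 is the
  most significant bit.\<close>

definition rotl :: "nat \<Rightarrow> nat \<Rightarrow> nat \<Rightarrow> nat" where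
  "rotl n r x = (x * 2 ^ r) mod 2 ^ n + x div 2 ^ (n - r)"

definition adpXR :: "nat \<Rightarrow> nat \<Rightarrow> nat \<Rightarrow> nat \<Rightarrow> nat \<Rightarrow> real" where
  "adpXR n r \<alpha> \<beta> \<gamma> =
     real (card {(x, y). x < 2 ^ n \<and> y < 2 ^ n \<and>
        rotl n r (xor ((x + \<alpha>) mod 2 ^ n) ((y + \<beta>) mod 2 ^ n))
          = (rotl n r (xor x y) + \<gamma>) mod 2 ^ n}) / 4 ^ n"

definition Nzero :: "nat \<Rightarrow> nat \<Rightarrow> nat" where
  "Nzero n r = card {(\<alpha>, \<beta>, \<gamma>). \<alpha> < 2 ^ n \<and> \<beta> < 2 ^ n \<and> \<gamma> < 2 ^ n \<and>
                       adpXR n r \<alpha> \<beta> \<gamma> = 0}"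

end

theory Submission
  imports Defs
begin

text \<open>Reading \<alpha>, \<beta>, \<gamma> from the least significant bit, a solution (x, y) exists iff a
  nondeterministic automaton accepts the letters (\<alpha>_i, \<beta>_i, \<gamma>_i): its states are the carries
  of x + \<alpha>, y + \<beta> and z + \<gamma>, where z is the rotated x \<oplus> y, and a letter can be read iff its
  parity equals that of the state. The rotation cuts the letters into a low word of length n - r
  and a high word of length r that must be read with matching \<gamma>-carries, so N(n, r) counts the
  incompatible pairs of words. The states reachable from a single state form the empty set, a
  point or a union of coordinate planes, and only the kind of this set (one of seven) matters, so
  summing over all words amounts to powers of a 7 x 7 transfer matrix with explicit closed forms.
  For r = 1 the incompatible pairs are counted exactly; in general they are squeezed between
  families that can be counted this way: high words that empty a point, first letters of the
  wrong parity, and high words all of whose \<gamma>-bits vanish.\<close>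

section \<open>Binary expansions and ripple-carry addition\<close>

text \<open>Bit lists are least significant bit first, the reverse of the order (x_0, ..., x_{n-1}).\<close>

fun bits :: "nat \<Rightarrow> nat \<Rightarrow> bool list" where
  "bits 0 x = []"
| "bits (Suc n) x = odd x # bits n (x div 2)"

lemma length_bits [simp]: "length (bits n x) = n"
  by (induction n arbitrary: x) auto

lemma bits_add_mult_power: "bits n (x + 2 ^ n * y) = bits n x"
proof (induction n arbitrary: x)
  case (Suc n)
  have "(x + 2 ^ Suc n * y) div 2 = x div 2 + 2 ^ n * y" by simp
  then show ?case using Suc by simp
qed simp

lemma bits_mod_power: "bits n (x mod 2 ^ n) = bits n x"
  using bits_add_mult_power[of n "x mod 2 ^ n" "x div 2 ^ n"] by simp

lemma bits_length_add: "bits (k + l) x = bits k x @ bits l (x div 2 ^ k)"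
  by (induction k arbitrary: x) (simp_all add: div_mult2_eq)

lemma bits_inject:
  assumes "x < 2 ^ n" "y < 2 ^ n" "bits n x = bits n y"
  shows "x = y"
  using assms
proof (induction n arbitrary: x y)
  case (Suc n)
  then have "x div 2 = y div 2" "x mod 2 = y mod 2"
    by (auto simp: mod2_eq_if)
  then show ?case by (metis div_mult_mod_eq)
qed simp

lemma bits_horner_sum: "bits (length bs) (horner_sum of_bool 2 bs) = bs"
  by (induction bs) auto

lemma bits_surj:
  assumes "length bs = n"
  obtains x where "x < 2 ^ n" "bits n x = bs"
  using assms horner_sum_of_bool_2_less[of bs] bits_horner_sum[of bs] by fastforce

definition maj :: "bool \<Rightarrow> bool \<Rightarrow> bool \<Rightarrow> bool" where
  "maj a b c \<longleftrightarrow> a \<and> b \<or> a \<and> c \<or> b \<and> c"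

fun add_bits :: "bool list \<Rightarrow> bool list \<Rightarrow> bool \<Rightarrow> bool list" where
  "add_bits (x # xs) (a # as) c = (x \<noteq> (a \<noteq> c)) # add_bits xs as (maj x a c)"
| "add_bits _ _ c = []"

fun carry_out :: "bool list \<Rightarrow> bool list \<Rightarrow> bool \<Rightarrow> bool" where
  "carry_out (x # xs) (a # as) c = carry_out xs as (maj x a c)"
| "carry_out _ _ c = c"

lemma length_add_bits [simp]: "length (add_bits xs as c) = min (length xs) (length as)"
  by (induction xs as c rule: add_bits.induct) auto

lemma add_bits_append:
  "length xs = length as \<Longrightarrow>
    add_bits (xs @ ys) (as @ bs) c = add_bits xs as c @ add_bits ys bs (carry_out xs as c)"
  by (induction xs as c rule: add_bits.induct) auto

lemma full_adder:
  fixes x a :: nat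
  shows "x + a + of_bool c =
    of_bool (odd x \<noteq> (odd a \<noteq> c)) + 2 * (x div 2 + a div 2 + of_bool (maj (odd x) (odd a) c))"
  by (cases "odd x"; cases "odd a"; cases c) (auto simp: maj_def elim!: oddE evenE)

lemma bits_add: "bits n (x + a + of_bool c) = add_bits (bits n x) (bits n a) c"
proof (induction n arbitrary: x a c)
  case (Suc n)
  have "odd (x + a + of_bool c) = (odd x \<noteq> (odd a \<noteq> c))"
    and "(x + a + of_bool c) div 2 = x div 2 + a div 2 + of_bool (maj (odd x) (odd a) c)"
    by (subst full_adder; simp)+
  then show ?case using Suc.IH by simp
qed simp

lemma bits_add_mod: "bits n ((x + a) mod 2 ^ n) = add_bits (bits n x) (bits n a) False"
  using bits_add[of n x a False] by (simp add: bits_mod_power)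

lemma bits_xor: "bits n (xor x y) = map2 (\<noteq>) (bits n x) (bits n y)"
proof (induction n arbitrary: x y)
  case (Suc n)
  have "odd (xor x y) = (odd x \<noteq> odd y)" and "xor x y div 2 = xor (x div 2) (y div 2)"
    by (subst xor_nat_rec; simp)+
  then show ?case using Suc.IH by simp
qed simp

lemma xor_less_power: "x < 2 ^ n \<Longrightarrow> y < 2 ^ n \<Longrightarrow> xor x y < (2::nat) ^ n"
  by (metis take_bit_nat_eq_self_iff take_bit_xor)

lemma rotl_eq_div_mod:
  assumes "v < 2 ^ n" "r \<le> n"
  shows "rotl n r v = v div 2 ^ (n - r) + 2 ^ r * (v mod 2 ^ (n - r))"
proof -
  define m where "m = n - r"
  have n: "n = m + r" using assms(2) unfolding m_def by simp
  have "v * 2 ^ r = (v mod 2 ^ m + 2 ^ m * (v div 2 ^ m)) * 2 ^ r"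
    by simp
  also have "\<dots> = (v mod 2 ^ m) * 2 ^ r + 2 ^ n * (v div 2 ^ m)"
    by (simp only: n power_add algebra_simps)
  finally have "v * 2 ^ r = (v mod 2 ^ m) * 2 ^ r + 2 ^ n * (v div 2 ^ m)" .
  moreover have "(v mod 2 ^ m) * 2 ^ r < 2 ^ n"
    by (simp add: n power_add)
  ultimately have "(v * 2 ^ r) mod 2 ^ n = (v mod 2 ^ m) * 2 ^ r" by simp
  then show ?thesis unfolding rotl_def m_def by simp
qed

lemma bits_rotl:
  assumes "v < 2 ^ n" "r \<le> n"
  shows "bits n (rotl n r v) = rotate (n - r) (bits n v)"
proof -
  define m where "m = n - r"
  have n: "n = m + r" "n = r + m" using assms(2) unfolding m_def by simp_all
  have high: "v div 2 ^ m < 2 ^ r"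
    using assms(1) by (simp add: n power_add less_mult_imp_div_less mult.commute)
  have "bits n (rotl n r v) = bits (r + m) (v div 2 ^ m + 2 ^ r * (v mod 2 ^ m))"
    using rotl_eq_div_mod[OF assms] n(2) unfolding m_def by simp
  also have "\<dots> = bits r (v div 2 ^ m) @ bits m (v mod 2 ^ m)"
    using high by (simp add: bits_length_add bits_add_mult_power)
  also have "\<dots> = rotate m (bits m (v mod 2 ^ m) @ bits r (v div 2 ^ m))"
    by (metis length_bits rotate_append)
  also have "\<dots> = rotate m (bits n v)"
    by (simp add: n(1) bits_length_add bits_mod_power)
  finally show ?thesis unfolding m_def .
qed

lemma rotl_less:
  assumes "v < 2 ^ n" "r \<le> n"
  shows "rotl n r v < 2 ^ n"
proof -
  define m where "m = n - r"
  have n: "n = m + r" using assms(2) unfolding m_def by simp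
  have "v div 2 ^ m < 2 ^ r"
    using assms(1) by (simp add: n power_add less_mult_imp_div_less mult.commute)
  moreover have "v mod 2 ^ m \<le> 2 ^ m - 1" by (simp add: less_Suc_eq_le[symmetric])
  ultimately have "v div 2 ^ m + 2 ^ r * (v mod 2 ^ m) < 2 ^ r + 2 ^ r * (2 ^ m - 1)"
    by (meson add_less_le_mono mult_le_mono2)
  also have "\<dots> = 2 ^ n" by (simp add: n power_add algebra_simps)
  finally show ?thesis using rotl_eq_div_mod[OF assms] unfolding m_def by simp
qed

section \<open>The carry automaton\<close>

type_synonym bit3 = "bool \<times> bool \<times> bool"

fun parity :: "bit3 \<Rightarrow> bool" where
  "parity (a, b, c) = (a \<noteq> (b \<noteq> c))"

fun carry_next :: "bit3 \<Rightarrow> bit3 \<Rightarrow> bool \<Rightarrow> bool \<Rightarrow> bit3" where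
  "carry_next (c1, c2, c3) (a, b, g) x y = (maj x a c1, maj y b c2, maj (x \<noteq> y) g c3)"

text \<open>A state holds the carries of the three additions x + \<alpha>, y + \<beta> and z + \<gamma> (z the rotated
  xor) into the current position, a letter the bits of \<alpha>, \<beta>, \<gamma> there. Whatever the bits of
  x and y, the two sides agree in this position iff state and letter have the same parity.\<close>

definition carry_step :: "bit3 \<Rightarrow> bit3 set \<Rightarrow> bit3 set" where
  "carry_step u S = {t. \<exists>s\<in>S. parity s = parity u \<and> (\<exists>x y. t = carry_next s u x y)}"

fun carries :: "bit3 list \<Rightarrow> bit3 set \<Rightarrow> bit3 set" where
  "carries [] S = S"
| "carries (u # us) S = carries us (carry_step u S)"

lemma carry_step_UN: "carry_step u (\<Union>i\<in>I. A i) = (\<Union>i\<in>I. carry_step u (A i))"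
  unfolding carry_step_def by auto

lemma carries_UN: "carries us (\<Union>i\<in>I. A i) = (\<Union>i\<in>I. carries us (A i))"
  by (induction us arbitrary: A) (auto simp: carry_step_UN)

lemma carries_eq_UN_singleton: "carries us S = (\<Union>s\<in>S. carries us {s})"
  using carries_UN[of us "\<lambda>s. {s}" S] by simp

lemma carries_mono: "S \<subseteq> T \<Longrightarrow> carries us S \<subseteq> carries us T"
  by (metis carries_eq_UN_singleton UN_mono order_refl)

lemma carry_step_empty [simp]: "carry_step u {} = {}"
  unfolding carry_step_def by simp

lemma carries_empty [simp]: "carries us {} = {}"
  by (induction us) auto

lemma parity_iff_sum_bit_agrees:
  "((x \<noteq> (a \<noteq> c1)) \<noteq> (y \<noteq> (b \<noteq> c2))) = ((x \<noteq> y) \<noteq> (g \<noteq> c3)) \<longleftrightarrow>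
    parity (c1, c2, c3) = parity (a, b, g)"
  by auto

lemma mem_carries_Cons_singleton:
  "t \<in> carries (u # us) {s} \<longleftrightarrow>
    parity s = parity u \<and> (\<exists>x y. t \<in> carries us {carry_next s u x y})"
proof -
  have "carry_step u {s} = (if parity s = parity u then \<Union>x. \<Union>y. {carry_next s u x y} else {})"
    unfolding carry_step_def by auto
  then show ?thesis by (simp add: carries_UN)
qed

lemma mem_carries_iff_addition:
  assumes "length bs = length as" "length gs = length as"
  shows "t \<in> carries (zip as (zip bs gs)) {(c1, c2, c3)} \<longleftrightarrow>
    (\<exists>xs ys. length xs = length as \<and> length ys = length as \<and>
       map2 (\<noteq>) (add_bits xs as c1) (add_bits ys bs c2) = add_bits (map2 (\<noteq>) xs ys) gs c3 \<and>
       t = (carry_out xs as c1, carry_out ys bs c2, carry_out (map2 (\<noteq>) xs ys) gs c3))"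
  using assms
proof (induction as arbitrary: bs gs c1 c2 c3)
  case (Cons a as)
  obtain b bs' g gs' where bg: "bs = b # bs'" "gs = g # gs'"
    using Cons.prems by (cases bs; cases gs) auto
  have len: "length bs' = length as" "length gs' = length as"
    using Cons.prems bg by auto
  have ex_Cons: "(\<exists>xs ys. length xs = Suc k \<and> length ys = Suc k \<and> P xs ys) \<longleftrightarrow>
      (\<exists>x y xs ys. length xs = k \<and> length ys = k \<and> P (x # xs) (y # ys))"
    for k and P :: "bool list \<Rightarrow> bool list \<Rightarrow> bool"
    by (metis length_Suc_conv)
  show ?case
    unfolding bg zip_Cons_Cons mem_carries_Cons_singleton carry_next.simps
      Cons.IH[OF len] length_Cons ex_Cons add_bits.simps carry_out.simps list.map prod.case
      list.inject parity_iff_sum_bit_agrees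
    by blast
qed simp

lemma rotl_equation_iff_bits:
  assumes "r \<le> n" "x < 2 ^ n" "y < 2 ^ n"
  shows "rotl n r (xor ((x + \<alpha>) mod 2 ^ n) ((y + \<beta>) mod 2 ^ n)) = (rotl n r (xor x y) + \<gamma>) mod 2 ^ n
    \<longleftrightarrow> rotate (n - r) (map2 (\<noteq>) (add_bits (bits n x) (bits n \<alpha>) False)
                                  (add_bits (bits n y) (bits n \<beta>) False))
        = add_bits (rotate (n - r) (map2 (\<noteq>) (bits n x) (bits n y))) (bits n \<gamma>) False"
proof -
  let ?v = "xor ((x + \<alpha>) mod 2 ^ n) ((y + \<beta>) mod 2 ^ n)"
  have v: "?v < 2 ^ n" and w: "xor x y < 2 ^ n"
    using assms(2,3) by (simp_all add: xor_less_power)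
  have eq: "a = b \<longleftrightarrow> bits n a = bits n b" if "a < 2 ^ n" "b < 2 ^ n" for a b
    using bits_inject[OF that] by blast
  have "bits n (rotl n r ?v) = rotate (n - r) (bits n ?v)"
    using bits_rotl[OF v] assms(1) by simp
  also have "bits n ?v = map2 (\<noteq>) (add_bits (bits n x) (bits n \<alpha>) False)
                                   (add_bits (bits n y) (bits n \<beta>) False)"
    by (simp only: bits_xor bits_add_mod)
  finally have lhs: "bits n (rotl n r ?v) = rotate (n - r) (map2 (\<noteq>)
      (add_bits (bits n x) (bits n \<alpha>) False) (add_bits (bits n y) (bits n \<beta>) False))" .
  have "bits n ((rotl n r (xor x y) + \<gamma>) mod 2 ^ n) = add_bits (bits n (rotl n r (xor x y))) (bits n \<gamma>) False"
    by (rule bits_add_mod)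
  also have "bits n (rotl n r (xor x y)) = rotate (n - r) (map2 (\<noteq>) (bits n x) (bits n y))"
    using bits_rotl[OF w] assms(1) by (simp only: bits_xor)
  finally have rhs: "bits n ((rotl n r (xor x y) + \<gamma>) mod 2 ^ n)
      = add_bits (rotate (n - r) (map2 (\<noteq>) (bits n x) (bits n y))) (bits n \<gamma>) False" .
  have "rotl n r ?v = (rotl n r (xor x y) + \<gamma>) mod 2 ^ n \<longleftrightarrow>
      bits n (rotl n r ?v) = bits n ((rotl n r (xor x y) + \<gamma>) mod 2 ^ n)"
    by (rule eq) (use rotl_less[OF v] assms(1) in simp_all)
  then show ?thesis unfolding lhs rhs .
qed

text \<open>Rotation by n - r moves the high r positions of x \<oplus> y to the bottom: they are added to
  the low r bits of \<gamma>, and the carry c0 out of them enters the addition of the low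
  n - r positions of x \<oplus> y to the high bits of \<gamma>.\<close>

lemma rotated_equation_split:
  assumes "length XL = m" "length YL = m" "length AL = m" "length BL = m"
    and "length XH = r" "length YH = r" "length AH = r" "length BH = r"
    and "length CL = r"
  defines "c1 \<equiv> carry_out XL AL False" and "c2 \<equiv> carry_out YL BL False"
    and "c0 \<equiv> carry_out (map2 (\<noteq>) XH YH) CL False"
  shows "rotate m (map2 (\<noteq>) (add_bits (XL @ XH) (AL @ AH) False) (add_bits (YL @ YH) (BL @ BH) False))
       = add_bits (rotate m (map2 (\<noteq>) (XL @ XH) (YL @ YH))) (CL @ CH) False
    \<longleftrightarrow> map2 (\<noteq>) (add_bits XH AH c1) (add_bits YH BH c2) = add_bits (map2 (\<noteq>) XH YH) CL False
      \<and> map2 (\<noteq>) (add_bits XL AL False) (add_bits YL BL False) = add_bits (map2 (\<noteq>) XL YL) CH c0"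
proof -
  have rotate_m: "rotate m (P @ Q) = Q @ P" if "length P = m" for P Q :: "bool list"
    using rotate_append[of P Q] that by simp
  have "rotate m (map2 (\<noteq>) (add_bits (XL @ XH) (AL @ AH) False) (add_bits (YL @ YH) (BL @ BH) False))
      = map2 (\<noteq>) (add_bits XH AH c1) (add_bits YH BH c2)
        @ map2 (\<noteq>) (add_bits XL AL False) (add_bits YL BL False)"
    using assms(1-8) unfolding c1_def c2_def
    by (simp add: add_bits_append zip_append rotate_m)
  moreover have "add_bits (rotate m (map2 (\<noteq>) (XL @ XH) (YL @ YH))) (CL @ CH) False
      = add_bits (map2 (\<noteq>) XH YH) CL False @ add_bits (map2 (\<noteq>) XL YL) CH c0"
    using assms(1,2,5,6,9) unfolding c0_def
    by (simp add: add_bits_append zip_append rotate_m)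
  ultimately show ?thesis
    using assms(5-9) by (simp add: append_eq_append_conv)
qed

text \<open>The low word is read starting from the carries (0, 0, c0), where c0 is the carry out of
  the \<gamma>-addition along the high word; the high word starts from the \<alpha>- and \<beta>-carries c1, c2
  left by the low word and a zero \<gamma>-carry.\<close>

definition compatible :: "bit3 list \<Rightarrow> bit3 list \<Rightarrow> bool" where
  "compatible wL wH \<longleftrightarrow> (\<exists>c0 c1 c2 c3 d1 d2.
     (c1, c2, c3) \<in> carries wL {(False, False, c0)} \<and> (d1, d2, c0) \<in> carries wH {(c1, c2, False)})"

definition low_word :: "nat \<Rightarrow> nat \<Rightarrow> nat \<Rightarrow> nat \<Rightarrow> nat \<Rightarrow> bit3 list" where
  "low_word n r \<alpha> \<beta> \<gamma> =
     zip (take (n - r) (bits n \<alpha>)) (zip (take (n - r) (bits n \<beta>)) (drop r (bits n \<gamma>)))"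

definition high_word :: "nat \<Rightarrow> nat \<Rightarrow> nat \<Rightarrow> nat \<Rightarrow> nat \<Rightarrow> bit3 list" where
  "high_word n r \<alpha> \<beta> \<gamma> =
     zip (drop (n - r) (bits n \<alpha>)) (zip (drop (n - r) (bits n \<beta>)) (take r (bits n \<gamma>)))"

lemma ex_bits_pair_iff:
  "(\<exists>x. x < 2 ^ n \<and> (\<exists>y. y < 2 ^ n \<and> P (bits n x) (bits n y))) \<longleftrightarrow>
    (\<exists>X. length X = n \<and> (\<exists>Y. length Y = n \<and> P X Y))"
proof
  assume "\<exists>X. length X = n \<and> (\<exists>Y. length Y = n \<and> P X Y)"
  then obtain X Y where "length X = n" "length Y = n" "P X Y" by blast
  moreover from bits_surj obtain x y where "x < 2 ^ n" "bits n x = X" "y < 2 ^ n" "bits n y = Y"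
    using \<open>length X = n\<close> \<open>length Y = n\<close> by metis
  ultimately have "x < 2 ^ n \<and> y < 2 ^ n \<and> P (bits n x) (bits n y)" by simp
  then show "\<exists>x. x < 2 ^ n \<and> (\<exists>y. y < 2 ^ n \<and> P (bits n x) (bits n y))" by blast
qed (use length_bits in blast)

lemma ex_length_append_iff:
  "(\<exists>X. length X = m + r \<and> P X) \<longleftrightarrow> (\<exists>XL XH. length XL = m \<and> length XH = r \<and> P (XL @ XH))"
proof
  assume "\<exists>X. length X = m + r \<and> P X"
  then obtain X where "length X = m + r" "P X" by blast
  then show "\<exists>XL XH. length XL = m \<and> length XH = r \<and> P (XL @ XH)"
    by (intro exI[of _ "take m X"] exI[of _ "drop m X"]) simp
qed force

lemma compatible_iff_addition:
  assumes "length AL = m" "length BL = m" "length CH = m"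
    and "length AH = r" "length BH = r" "length CL = r"
  shows "compatible (zip AL (zip BL CH)) (zip AH (zip BH CL)) \<longleftrightarrow>
    (\<exists>XL XH. length XL = m \<and> length XH = r \<and> (\<exists>YL YH. length YL = m \<and> length YH = r \<and>
      map2 (\<noteq>) (add_bits XH AH (carry_out XL AL False)) (add_bits YH BH (carry_out YL BL False))
        = add_bits (map2 (\<noteq>) XH YH) CL False \<and>
      map2 (\<noteq>) (add_bits XL AL False) (add_bits YL BL False)
        = add_bits (map2 (\<noteq>) XL YL) CH (carry_out (map2 (\<noteq>) XH YH) CL False)))"
    (is "_ \<longleftrightarrow> (\<exists>XL XH. _ \<and> _ \<and> (\<exists>YL YH. _ \<and> _ \<and> ?high XL XH YL YH \<and> ?low XL XH YL YH))")
proof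
  assume "compatible (zip AL (zip BL CH)) (zip AH (zip BH CL))"
  then obtain c0 c1 c2 c3 d1 d2 XL YL XH YH where
    "length XL = m" "length YL = m" "length XH = r" "length YH = r"
    "map2 (\<noteq>) (add_bits XL AL False) (add_bits YL BL False) = add_bits (map2 (\<noteq>) XL YL) CH c0"
    "(c1, c2, c3) = (carry_out XL AL False, carry_out YL BL False, carry_out (map2 (\<noteq>) XL YL) CH c0)"
    "map2 (\<noteq>) (add_bits XH AH c1) (add_bits YH BH c2) = add_bits (map2 (\<noteq>) XH YH) CL False"
    "(d1, d2, c0) = (carry_out XH AH c1, carry_out YH BH c2, carry_out (map2 (\<noteq>) XH YH) CL False)"
    unfolding compatible_def using assms by (auto simp: mem_carries_iff_addition)
  then show "\<exists>XL XH. length XL = m \<and> length XH = r \<and>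
      (\<exists>YL YH. length YL = m \<and> length YH = r \<and> ?high XL XH YL YH \<and> ?low XL XH YL YH)"
    by auto
next
  assume "\<exists>XL XH. length XL = m \<and> length XH = r \<and>
      (\<exists>YL YH. length YL = m \<and> length YH = r \<and> ?high XL XH YL YH \<and> ?low XL XH YL YH)"
  then obtain XL XH YL YH where len: "length XL = m" "length XH = r" "length YL = m" "length YH = r"
    and eq: "?high XL XH YL YH" "?low XL XH YL YH" by blast
  define c0 c1 c2 where "c0 = carry_out (map2 (\<noteq>) XH YH) CL False"
    and "c1 = carry_out XL AL False" and "c2 = carry_out YL BL False"
  have "(c1, c2, carry_out (map2 (\<noteq>) XL YL) CH c0) \<in> carries (zip AL (zip BL CH)) {(False, False, c0)}"
    using assms len eq unfolding c0_def c1_def c2_def by (auto simp: mem_carries_iff_addition)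
  moreover have "(carry_out XH AH c1, carry_out YH BH c2, c0) \<in> carries (zip AH (zip BH CL)) {(c1, c2, False)}"
    using assms len eq unfolding c0_def c1_def c2_def by (auto simp: mem_carries_iff_addition)
  ultimately show "compatible (zip AL (zip BL CH)) (zip AH (zip BH CL))"
    unfolding compatible_def by blast
qed

lemma solvable_iff_compatible:
  assumes "r \<le> n"
  shows "(\<exists>x y. x < 2 ^ n \<and> y < 2 ^ n \<and>
      rotl n r (xor ((x + \<alpha>) mod 2 ^ n) ((y + \<beta>) mod 2 ^ n)) = (rotl n r (xor x y) + \<gamma>) mod 2 ^ n)
    \<longleftrightarrow> compatible (low_word n r \<alpha> \<beta> \<gamma>) (high_word n r \<alpha> \<beta> \<gamma>)"
proof -
  define m where "m = n - r"
  have n: "n = m + r" using assms unfolding m_def by simp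
  define AL AH BL BH CL CH where "AL = take m (bits n \<alpha>)" and "AH = drop m (bits n \<alpha>)"
    and "BL = take m (bits n \<beta>)" and "BH = drop m (bits n \<beta>)"
    and "CL = take r (bits n \<gamma>)" and "CH = drop r (bits n \<gamma>)"
  have split: "bits n \<alpha> = AL @ AH" "bits n \<beta> = BL @ BH" "bits n \<gamma> = CL @ CH"
    unfolding AL_def AH_def BL_def BH_def CL_def CH_def by simp_all
  have len: "length AL = m" "length BL = m" "length CH = m"
    "length AH = r" "length BH = r" "length CL = r"
    unfolding AL_def AH_def BL_def BH_def CL_def CH_def n by simp_all
  have "(\<exists>x y. x < 2 ^ n \<and> y < 2 ^ n \<and>
      rotl n r (xor ((x + \<alpha>) mod 2 ^ n) ((y + \<beta>) mod 2 ^ n)) = (rotl n r (xor x y) + \<gamma>) mod 2 ^ n)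
    \<longleftrightarrow> (\<exists>x. x < 2 ^ n \<and> (\<exists>y. y < 2 ^ n \<and>
      rotate m (map2 (\<noteq>) (add_bits (bits n x) (AL @ AH) False) (add_bits (bits n y) (BL @ BH) False))
        = add_bits (rotate m (map2 (\<noteq>) (bits n x) (bits n y))) (CL @ CH) False))"
    unfolding split[symmetric]
    using rotl_equation_iff_bits[OF assms, folded m_def]
    by (simp only: ex_simps, intro ex_cong1 conj_cong refl) simp_all
  also have "\<dots> \<longleftrightarrow> (\<exists>X. length X = m + r \<and> (\<exists>Y. length Y = m + r \<and>
      rotate m (map2 (\<noteq>) (add_bits X (AL @ AH) False) (add_bits Y (BL @ BH) False))
        = add_bits (rotate m (map2 (\<noteq>) X Y)) (CL @ CH) False))"
    unfolding n[symmetric] by (rule ex_bits_pair_iff)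
  also have "\<dots> \<longleftrightarrow> compatible (zip AL (zip BL CH)) (zip AH (zip BH CL))"
    unfolding compatible_iff_addition[OF len] ex_length_append_iff
    by (intro ex_cong1 conj_cong refl, rule rotated_equation_split) (simp_all add: len)
  finally show ?thesis
    unfolding low_word_def high_word_def AL_def AH_def BL_def BH_def CL_def CH_def m_def .
qed

definition words :: "nat \<Rightarrow> bit3 list set" where
  "words j = {ws. length ws = j}"

lemma finite_words [simp]: "finite (words j)"
  using finite_lists_length_eq[of "UNIV :: bit3 set" j] unfolding words_def by simp

definition failures :: "nat \<Rightarrow> nat \<Rightarrow> nat" where
  "failures m r = card {w \<in> words m \<times> words r. \<not> compatible (fst w) (snd w)}"

lemma adpXR_eq_0_iff:
  assumes "r \<le> n"
  shows "adpXR n r \<alpha> \<beta> \<gamma> = 0 \<longleftrightarrow> \<not> compatible (low_word n r \<alpha> \<beta> \<gamma>) (high_word n r \<alpha> \<beta> \<gamma>)"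
proof -
  let ?S = "{(x, y). x < 2 ^ n \<and> y < 2 ^ n \<and>
      rotl n r (xor ((x + \<alpha>) mod 2 ^ n) ((y + \<beta>) mod 2 ^ n)) = (rotl n r (xor x y) + \<gamma>) mod 2 ^ n}"
  have "finite ?S" by (rule finite_subset[of _ "{..<2 ^ n} \<times> {..<2 ^ n}"]) auto
  then have "adpXR n r \<alpha> \<beta> \<gamma> = 0 \<longleftrightarrow> ?S = {}" unfolding adpXR_def by simp
  also have "\<dots> \<longleftrightarrow> \<not> compatible (low_word n r \<alpha> \<beta> \<gamma>) (high_word n r \<alpha> \<beta> \<gamma>)"
    unfolding solvable_iff_compatible[OF assms, symmetric] by auto
  finally show ?thesis .
qed

lemma zip_zip_inject:
  assumes "length b = length a" "length c = length a" "length b' = length a'" "length c' = length a'"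
    and "zip a (zip b c) = zip a' (zip b' c')"
  shows "a = a' \<and> b = b' \<and> c = c'"
  by (metis assms zip_eq_conv map_fst_zip map_snd_zip length_zip min.idem)

lemma zip_zip_map: "zip (map fst ws) (zip (map (fst \<circ> snd) ws) (map (snd \<circ> snd) ws)) = ws"
  by (induction ws) auto

definition word_pair :: "nat \<Rightarrow> nat \<Rightarrow> nat \<times> nat \<times> nat \<Rightarrow> bit3 list \<times> bit3 list" where
  "word_pair n r = (\<lambda>(\<alpha>, \<beta>, \<gamma>). (low_word n r \<alpha> \<beta> \<gamma>, high_word n r \<alpha> \<beta> \<gamma>))"

lemma inj_on_word_pair:
  assumes "r \<le> n"
  shows "inj_on (word_pair n r) ({..<2 ^ n} \<times> {..<2 ^ n} \<times> {..<2 ^ n})"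
proof (rule inj_onI, clarsimp simp: word_pair_def)
  fix \<alpha> \<beta> \<gamma> \<alpha>' \<beta>' \<gamma>' :: nat
  assume less: "\<alpha> < 2 ^ n" "\<beta> < 2 ^ n" "\<gamma> < 2 ^ n" "\<alpha>' < 2 ^ n" "\<beta>' < 2 ^ n" "\<gamma>' < 2 ^ n"
    and low: "low_word n r \<alpha> \<beta> \<gamma> = low_word n r \<alpha>' \<beta>' \<gamma>'"
    and high: "high_word n r \<alpha> \<beta> \<gamma> = high_word n r \<alpha>' \<beta>' \<gamma>'"
  have "take (n - r) (bits n \<alpha>) = take (n - r) (bits n \<alpha>') \<and> take (n - r) (bits n \<beta>) = take (n - r) (bits n \<beta>')
      \<and> drop r (bits n \<gamma>) = drop r (bits n \<gamma>')"
    by (rule zip_zip_inject) (use low assms in \<open>simp_all add: low_word_def\<close>)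
  moreover have "drop (n - r) (bits n \<alpha>) = drop (n - r) (bits n \<alpha>') \<and> drop (n - r) (bits n \<beta>) = drop (n - r) (bits n \<beta>')
      \<and> take r (bits n \<gamma>) = take r (bits n \<gamma>')"
    by (rule zip_zip_inject) (use high assms in \<open>simp_all add: high_word_def\<close>)
  ultimately have "bits n \<alpha> = bits n \<alpha>'" "bits n \<beta> = bits n \<beta>'" "bits n \<gamma> = bits n \<gamma>'"
    by (metis append_take_drop_id)+
  then show "\<alpha> = \<alpha>' \<and> \<beta> = \<beta>' \<and> \<gamma> = \<gamma>'"
    using less bits_inject by blast
qed

lemma word_pair_image:
  assumes "r \<le> n"
  shows "word_pair n r ` ({..<2 ^ n} \<times> {..<2 ^ n} \<times> {..<2 ^ n}) = words (n - r) \<times> words r"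
proof
  show "word_pair n r ` ({..<2 ^ n} \<times> {..<2 ^ n} \<times> {..<2 ^ n}) \<subseteq> words (n - r) \<times> words r"
    using assms by (auto simp: word_pair_def words_def low_word_def high_word_def)
next
  show "words (n - r) \<times> words r \<subseteq> word_pair n r ` ({..<2 ^ n} \<times> {..<2 ^ n} \<times> {..<2 ^ n})"
  proof clarify
    fix wL wH assume w: "wL \<in> words (n - r)" "wH \<in> words r"
    define A B C where "A = map fst wL @ map fst wH"
      and "B = map (fst \<circ> snd) wL @ map (fst \<circ> snd) wH"
      and "C = map (snd \<circ> snd) wH @ map (snd \<circ> snd) wL"
    have len: "length A = n" "length B = n" "length C = n"
      using w assms unfolding A_def B_def C_def words_def by auto
    have bits: "bits n (horner_sum of_bool 2 A) = A" "bits n (horner_sum of_bool 2 B) = B"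
        "bits n (horner_sum of_bool 2 C) = C"
      using bits_horner_sum len by metis+
    have "word_pair n r (horner_sum of_bool 2 A, horner_sum of_bool 2 B, horner_sum of_bool 2 C) = (wL, wH)"
      using w zip_zip_map[of wL] zip_zip_map[of wH]
      unfolding word_pair_def low_word_def high_word_def split bits
      unfolding A_def B_def C_def words_def by simp
    moreover have "horner_sum of_bool 2 A < (2::nat) ^ n" "horner_sum of_bool 2 B < (2::nat) ^ n"
        "horner_sum of_bool 2 C < (2::nat) ^ n"
      using horner_sum_of_bool_2_less len by metis+
    ultimately show "(wL, wH) \<in> word_pair n r ` ({..<2 ^ n} \<times> {..<2 ^ n} \<times> {..<2 ^ n})"
      by (auto intro!: image_eqI[where x = "(horner_sum of_bool 2 A, horner_sum of_bool 2 B,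
          horner_sum of_bool 2 C)"])
  qed
qed

lemma Nzero_eq_failures:
  assumes "r \<le> n"
  shows "Nzero n r = failures (n - r) r"
proof -
  let ?T = "{..<2 ^ n} \<times> {..<2 ^ n} \<times> {..<(2::nat) ^ n}"
  let ?P = "\<lambda>w. \<not> compatible (fst w) (snd w)"
  have "{(\<alpha>, \<beta>, \<gamma>). \<alpha> < 2 ^ n \<and> \<beta> < 2 ^ n \<and> \<gamma> < 2 ^ n \<and> adpXR n r \<alpha> \<beta> \<gamma> = 0}
      = {t \<in> ?T. ?P (word_pair n r t)}"
    using adpXR_eq_0_iff[OF assms] by (auto simp: word_pair_def)
  then have "Nzero n r = card {t \<in> ?T. ?P (word_pair n r t)}"
    unfolding Nzero_def by simp
  also have "\<dots> = card (word_pair n r ` {t \<in> ?T. ?P (word_pair n r t)})"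
    by (intro card_image[symmetric] inj_on_subset[OF inj_on_word_pair[OF assms]]) auto
  also have "word_pair n r ` {t \<in> ?T. ?P (word_pair n r t)} = {w \<in> word_pair n r ` ?T. ?P w}"
    by (rule Compr_image_eq[symmetric])
  finally show ?thesis
    unfolding failures_def word_pair_image[OF assms] .
qed

section \<open>Sets of reachable carries\<close>

text \<open>(q1, q2, q3) stands for the union of the coordinate planes {c_i = v} with q_i = Some v.\<close>

type_synonym planes = "bool option \<times> bool option \<times> bool option"

fun plane_union :: "planes \<Rightarrow> bit3 set" where
  "plane_union (q1, q2, q3) = {(a, b, c). q1 = Some a \<or> q2 = Some b \<or> q3 = Some c}"

fun planes_step :: "bit3 \<Rightarrow> planes \<Rightarrow> planes" where
  "planes_step (a, b, g) (q1, q2, q3) =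
    ((if q1 = Some a \<or> q2 = Some (\<not> b) \<or> q3 = Some (\<not> g) then Some a else None),
     (if q2 = Some b \<or> q1 = Some (\<not> a) \<or> q3 = Some (\<not> g) then Some b else None),
     (if q3 = Some g \<or> q1 = Some (\<not> a) \<or> q2 = Some (\<not> b) then Some g else None))"

text \<open>Distinct states of equal parity agree in exactly one coordinate.\<close>

fun common_plane :: "bit3 \<Rightarrow> bit3 \<Rightarrow> planes" where
  "common_plane (s1, s2, s3) (a, b, g) =
     (if s1 = a then (Some a, None, None) else if s2 = b then (None, Some b, None)
      else (None, None, Some g))"

lemma carry_step_Un: "carry_step u (A \<union> B) = carry_step u A \<union> carry_step u B"
  unfolding carry_step_def by auto

lemma carry_step_mono: "S \<subseteq> T \<Longrightarrow> carry_step u S \<subseteq> carry_step u T"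
  unfolding carry_step_def by blast

lemma carry_step_plane1:
  "(t1, t2, t3) \<in> carry_step (a, b, g) {(x, y, z). x = v} \<longleftrightarrow>
    (if a = v then t1 = v else t2 = b \<or> t3 = g)"
  unfolding carry_step_def Bex_def split_paired_Ex mem_Collect_eq case_prod_conv
  by (simp add: ex_bool_eq maj_def; cases a; cases v; simp; cases b; cases g; simp; blast)

lemma carry_step_plane2:
  "(t1, t2, t3) \<in> carry_step (a, b, g) {(x, y, z). y = v} \<longleftrightarrow>
    (if b = v then t2 = v else t1 = a \<or> t3 = g)"
  unfolding carry_step_def Bex_def split_paired_Ex mem_Collect_eq case_prod_conv
  by (simp add: ex_bool_eq maj_def; cases b; cases v; simp; cases a; cases g; simp; blast)

lemma carry_step_plane3:
  "(t1, t2, t3) \<in> carry_step (a, b, g) {(x, y, z). z = v} \<longleftrightarrow>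
    (if g = v then t3 = v else t1 = a \<or> t2 = b)"
  unfolding carry_step_def Bex_def split_paired_Ex mem_Collect_eq case_prod_conv
  by (simp add: ex_bool_eq maj_def; cases g; cases v; simp; cases a; cases b; simp; blast)

lemma plane_union_eq_UN:
  "plane_union (q1, q2, q3) = (\<Union>v\<in>set_option q1. {(x, y, z). x = v})
     \<union> (\<Union>v\<in>set_option q2. {(x, y, z). y = v}) \<union> (\<Union>v\<in>set_option q3. {(x, y, z). z = v})"
  by (cases q1; cases q2; cases q3) auto

lemma carry_step_plane_union: "carry_step u (plane_union q) = plane_union (planes_step u q)"
proof (rule set_eqI)
  fix t :: bit3
  obtain a b g where u: "u = (a, b, g)" by (cases u)
  obtain q1 q2 q3 where q: "q = (q1, q2, q3)" by (cases q)
  obtain t1 t2 t3 where t: "t = (t1, t2, t3)" by (cases t)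
  show "t \<in> carry_step u (plane_union q) \<longleftrightarrow> t \<in> plane_union (planes_step u q)"
    unfolding u q t plane_union_eq_UN carry_step_Un carry_step_UN Un_iff
    by (cases q1; cases q2; cases q3;
        simp add: carry_step_plane1 carry_step_plane2 carry_step_plane3; auto)
qed

lemma carry_step_singleton:
  "carry_step u {s} =
    (if parity s \<noteq> parity u then {} else if s = u then {u} else plane_union (common_plane s u))"
proof (rule set_eqI)
  fix t :: bit3
  obtain a b g where u: "u = (a, b, g)" by (cases u)
  obtain s1 s2 s3 where s: "s = (s1, s2, s3)" by (cases s)
  obtain t1 t2 t3 where t: "t = (t1, t2, t3)" by (cases t)
  show "t \<in> carry_step u {s} \<longleftrightarrow>
      t \<in> (if parity s \<noteq> parity u then {} else if s = u then {u} else plane_union (common_plane s u))"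
    unfolding u s t carry_step_def mem_Collect_eq
    by (cases a; cases b; cases g; cases s1; cases s2; cases s3) (auto simp add: ex_bool_eq maj_def)
qed

fun planes_run :: "bit3 list \<Rightarrow> planes \<Rightarrow> planes" where
  "planes_run [] q = q"
| "planes_run (u # us) q = planes_run us (planes_step u q)"

lemma carries_plane_union: "carries us (plane_union q) = plane_union (planes_run us q)"
  by (induction us arbitrary: q) (auto simp: carry_step_plane_union)

definition has_ab_plane :: "planes \<Rightarrow> bool" where
  "has_ab_plane q \<longleftrightarrow> fst q \<noteq> None \<or> fst (snd q) \<noteq> None"

definition gamma_zero :: "bit3 list \<Rightarrow> bool" where
  "gamma_zero us \<longleftrightarrow> (\<forall>u\<in>set us. \<not> snd (snd u))"

lemma has_ab_plane_step: "has_ab_plane q \<Longrightarrow> has_ab_plane (planes_step u q)"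
  by (cases u; cases q; rename_tac q1 q23; case_tac q23; case_tac q1) (auto simp: has_ab_plane_def)

lemma has_ab_plane_run: "has_ab_plane q \<Longrightarrow> has_ab_plane (planes_run us q)"
  by (induction us arbitrary: q) (auto simp: has_ab_plane_step)

lemma has_ab_plane_hits: "has_ab_plane q \<Longrightarrow> \<exists>d1 d2. (d1, d2, c) \<in> plane_union q"
  by (cases q; rename_tac q1 q23; case_tac q23; case_tac q1) (auto simp: has_ab_plane_def)

lemma planes_run_gamma_plane:
  "planes_run us (None, None, Some False) = (None, None, Some False) \<and> gamma_zero us
    \<or> has_ab_plane (planes_run us (None, None, Some False))"
proof (induction us)
  case (Cons u us)
  obtain a b g where u: "u = (a, b, g)" by (cases u)
  show ?case
  proof (cases g)
    case True
    then have "has_ab_plane (planes_step u (None, None, Some False))"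
      unfolding u has_ab_plane_def by simp
    then show ?thesis using has_ab_plane_run by simp
  next
    case False
    then show ?thesis using Cons u by (simp add: gamma_zero_def)
  qed
qed (simp add: gamma_zero_def)

lemma common_plane_cases:
  assumes "parity s = parity u" "s \<noteq> u" "\<not> snd (snd s)"
  shows "has_ab_plane (common_plane s u) \<or> common_plane s u = (None, None, Some False) \<and> \<not> snd (snd u)"
proof -
  obtain a b g where u: "u = (a, b, g)" by (cases u)
  obtain s1 s2 s3 where s: "s = (s1, s2, s3)" by (cases s)
  show ?thesis using assms unfolding u s has_ab_plane_def
    by (cases a; cases b; cases g; cases s1; cases s2; cases s3; simp)
qed

text \<open>An \<alpha>- or \<beta>-plane, once reached, stays and meets every \<gamma>-carry; so a run that enters a
  plane and still misses the \<gamma>-carry c0 must stay in {c3 = 0}, which forces c0 and all \<gamma>-bits.\<close>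

lemma fail_after_plane:
  assumes "s \<in> R" "\<not> snd (snd s)" "parity s = parity u" "s \<noteq> u"
    and fail: "\<forall>d1 d2. (d1, d2, c0) \<notin> carries (u # us) R"
  shows "c0 \<and> gamma_zero (u # us)"
proof -
  have "carries us (carry_step u {s}) \<subseteq> carries us (carry_step u R)"
    using assms(1) by (intro carries_mono carry_step_mono) auto
  then have sub: "plane_union (planes_run us (common_plane s u)) \<subseteq> carries (u # us) R"
    using assms(3,4) by (simp add: carry_step_singleton carries_plane_union)
  have no_ab: "\<not> has_ab_plane (planes_run us (common_plane s u))"
    using has_ab_plane_hits sub fail by blast
  then have c: "common_plane s u = (None, None, Some False)" and u: "\<not> snd (snd u)"
    using common_plane_cases[OF assms(3,4,2)] has_ab_plane_run by blast+
  then have us: "planes_run us (None, None, Some False) = (None, None, Some False) \<and> gamma_zero us"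
    using planes_run_gamma_plane[of us] no_ab by auto
  then have "(False, False, False) \<in> carries (u # us) R" using sub c by auto
  then have "c0" using fail by (cases c0) auto
  then show ?thesis using u us by (simp add: gamma_zero_def)
qed

lemma fail_from_point:
  assumes "\<not> snd (snd s)" "\<forall>d1 d2. (d1, d2, c0) \<notin> carries us {s}"
  shows "carries us {s} = {} \<or> c0 \<and> gamma_zero us"
  using assms
proof (induction us arbitrary: s)
  case Nil
  then show ?case by (cases s; cases c0) (auto simp: gamma_zero_def)
next
  case (Cons u us)
  consider "parity s \<noteq> parity u" | "s = u" | "parity s = parity u" "s \<noteq> u" by blast
  then show ?case
  proof cases
    case 2
    then show ?thesis using Cons.IH[of u] Cons.prems by (auto simp: gamma_zero_def carry_step_singleton)
  next
    case 3
    then show ?thesis using fail_after_plane[of s "{s}" u c0 us] Cons.prems by auto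
  qed (simp add: carry_step_singleton)
qed

lemma fail_cases:
  assumes "\<forall>s\<in>R. \<not> snd (snd s)" "\<forall>d1 d2. (d1, d2, c0) \<notin> carries us R"
  shows "c0 \<and> gamma_zero us \<or> R = {}
     \<or> (\<exists>u us'. us = u # us' \<and> (\<forall>s\<in>R. parity s \<noteq> parity u))
     \<or> (\<exists>u us'. us = u # us' \<and> u \<in> R \<and> (\<forall>s\<in>R. parity s = parity u \<longrightarrow> s = u) \<and> carries us' {u} = {})"
proof (cases us)
  case Nil
  then show ?thesis using assms by (cases c0) (auto simp: gamma_zero_def)
next
  case (Cons u us')
  consider "\<exists>s\<in>R. parity s = parity u \<and> s \<noteq> u" | "\<forall>s\<in>R. parity s \<noteq> parity u"
    | "u \<in> R" "\<forall>s\<in>R. parity s = parity u \<longrightarrow> s = u" by blast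
  then show ?thesis
  proof cases
    case 1
    then show ?thesis using fail_after_plane[of _ R u c0 us'] assms Cons by blast
  next
    case 3
    have "carry_step u R = (\<Union>s\<in>R. carry_step u {s})"
      using carry_step_UN[of u "\<lambda>s. {s}" R] by simp
    also have "\<dots> = {u}"
      using 3 by (auto simp: carry_step_singleton)
    finally have "\<forall>d1 d2. (d1, d2, c0) \<notin> carries us' {u}"
      using assms(2) Cons by simp
    then show ?thesis using fail_from_point[of u c0 us'] 3 assms(1) Cons by (auto simp: gamma_zero_def)
  qed (use Cons in blast)
qed

section \<open>Counting words by the kind of their reachable set\<close>

datatype shape = Dead | Point bit3 | Planes planes

fun shape_set :: "shape \<Rightarrow> bit3 set" where
  "shape_set Dead = {}"
| "shape_set (Point s) = {s}"
| "shape_set (Planes q) = plane_union q"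

fun shape_step :: "bit3 \<Rightarrow> shape \<Rightarrow> shape" where
  "shape_step u Dead = Dead"
| "shape_step u (Point s) =
    (if parity s \<noteq> parity u then Dead else if s = u then Point s else Planes (common_plane s u))"
| "shape_step u (Planes q) = Planes (planes_step u q)"

fun shape_run :: "bit3 list \<Rightarrow> shape \<Rightarrow> shape" where
  "shape_run [] a = a"
| "shape_run (u # us) a = shape_run us (shape_step u a)"

lemma carry_step_shape_set: "carry_step u (shape_set a) = shape_set (shape_step u a)"
  by (cases a) (auto simp: carry_step_singleton carry_step_plane_union)

lemma shape_run_Dead [simp]: "shape_run us Dead = Dead"
  by (induction us) auto

lemma carries_shape_set: "carries us (shape_set a) = shape_set (shape_run us a)"
  by (induction us arbitrary: a) (auto simp: carry_step_shape_set)

text \<open>Kinds of plane unions: K_ab is one \<alpha>- or \<beta>-plane, K_c the \<gamma>-plane alone, K_ab_ab an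
  \<alpha>- and a \<beta>-plane, K_ab_c one of them with the \<gamma>-plane, K_all all three planes.\<close>

datatype kind = K_dead | K_point | K_ab | K_c | K_ab_ab | K_ab_c | K_all

fun planes_kind :: "planes \<Rightarrow> kind" where
  "planes_kind (q1, q2, q3) =
    (if q3 = None then
       (if q1 = None then (if q2 = None then K_dead else K_ab) else (if q2 = None then K_ab else K_ab_ab))
     else (if q1 = None \<and> q2 = None then K_c else if q1 \<noteq> None \<and> q2 \<noteq> None then K_all else K_ab_c))"

fun shape_kind :: "shape \<Rightarrow> kind" where
  "shape_kind Dead = K_dead"
| "shape_kind (Point s) = K_point"
| "shape_kind (Planes q) = planes_kind q"

lemma planes_kind_not_point [simp]: "planes_kind q \<noteq> K_point"
  by (cases q) simp

lemma shape_set_empty_iff: "shape_set a = {} \<longleftrightarrow> shape_kind a = K_dead"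
proof (cases a)
  case (Planes q)
  then show ?thesis by (cases q; rename_tac q1 q23; case_tac q23; case_tac q1; rename_tac q2 q3;
    case_tac q2; case_tac q3; auto)
qed auto

text \<open>kind_step is the transfer matrix: kind_step f k sums f over the kinds of the sets reached from
  a set of kind k by the eight letters (sum_shape_step), so walk_sum j w k sums w over all words
  of length j (sum_words_shape_run).\<close>

fun kind_step :: "(kind \<Rightarrow> nat) \<Rightarrow> kind \<Rightarrow> nat" where
  "kind_step f K_dead = 8 * f K_dead"
| "kind_step f K_point = 4 * f K_dead + f K_c + f K_point + 2 * f K_ab"
| "kind_step f K_ab = 4 * f K_ab + 4 * f K_ab_c"
| "kind_step f K_c = 4 * f K_c + 4 * f K_ab_ab"
| "kind_step f K_ab_ab = 4 * f K_ab_c + 2 * f K_all + 2 * f K_ab_ab"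
| "kind_step f K_ab_c = 4 * f K_ab_c + 2 * f K_all + 2 * f K_ab_ab"
| "kind_step f K_all = 2 * f K_ab_c + 5 * f K_all + f K_ab_ab"

fun walk_sum :: "nat \<Rightarrow> (kind \<Rightarrow> nat) \<Rightarrow> kind \<Rightarrow> nat" where
  "walk_sum 0 w = w"
| "walk_sum (Suc j) w = kind_step (walk_sum j w)"

lemma sum_bit3:
  "(\<Sum>u\<in>UNIV. f u) =
    f (False, False, False) + f (False, False, True) + f (False, True, False) + f (False, True, True) +
    f (True, False, False) + f (True, False, True) + f (True, True, False) + f (True, True, True)"
proof -
  have "(\<Sum>u\<in>UNIV. f u) = (\<Sum>a\<in>UNIV. \<Sum>b\<in>UNIV. \<Sum>c\<in>UNIV. f (a, b, c))"
    by (simp add: UNIV_Times_UNIV[symmetric] sum.cartesian_product del: UNIV_Times_UNIV)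
  then show ?thesis by (simp add: UNIV_bool add.assoc)
qed

lemma card_UNIV_bit3: "card (UNIV :: bit3 set) = 8"
  by (simp only: card_eq_sum sum_bit3)

lemma sum_shape_step: "(\<Sum>u\<in>UNIV. f (shape_kind (shape_step u a))) = kind_step f (shape_kind a)"
proof (cases a)
  case (Point s)
  then show ?thesis by (cases s) (auto simp: sum_bit3)
next
  case (Planes q)
  obtain q1 q2 q3 where q: "q = (q1, q2, q3)" by (cases q)
  show ?thesis unfolding Planes q by (cases q1; cases q2; cases q3; simp add: sum_bit3)
qed (simp only: sum_bit3; simp)

lemma words_0: "words 0 = {[]}"
  unfolding words_def by auto

lemma card_words: "card (words j) = 8 ^ j"
  using card_lists_length_eq[of "UNIV :: bit3 set" j] unfolding words_def by (simp add: card_UNIV_bit3)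

lemma sum_words_Suc: "(\<Sum>us\<in>words (Suc j). f us) = (\<Sum>u\<in>UNIV. \<Sum>us\<in>words j. f (u # us))"
proof -
  have "words (Suc j) = (\<lambda>(u, us). u # us) ` (UNIV \<times> words j)"
    unfolding words_def by (auto simp: length_Suc_conv)
  moreover have "inj_on (\<lambda>(u, us). u # us) (UNIV \<times> words j)"
    by (auto simp: inj_on_def)
  ultimately show ?thesis
    by (simp add: sum.reindex sum.cartesian_product split_def)
qed

lemma sum_words_shape_run:
  "(\<Sum>us\<in>words j. w (shape_kind (shape_run us a))) = walk_sum j w (shape_kind a)"
proof (induction j arbitrary: a)
  case 0
  then show ?case by (simp add: words_0)
next
  case (Suc j)
  have "(\<Sum>us\<in>words (Suc j). w (shape_kind (shape_run us a)))
      = (\<Sum>u\<in>UNIV. walk_sum j w (shape_kind (shape_step u a)))"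
    by (simp add: sum_words_Suc Suc.IH)
  also have "\<dots> = walk_sum (Suc j) w (shape_kind a)"
    by (simp only: sum_shape_step walk_sum.simps)
  finally show ?case .
qed

text \<open>The number of words of length j that empty a point (sum_words_kill).\<close>

fun kill_count :: "nat \<Rightarrow> nat" where
  "kill_count 0 = 0"
| "kill_count (Suc j) = 4 * 8 ^ j + kill_count j"

lemma kill_count_real: "real (kill_count j) = 4 / 7 * (8 ^ j - 1)"
  by (induction j) (auto simp: field_simps)

lemma walk_sum_dead: "walk_sum j w K_dead = 8 ^ j * w K_dead"
  by (induction j) auto

lemma walk_sum_plane_const:
  assumes "\<And>k. k \<noteq> K_dead \<Longrightarrow> k \<noteq> K_point \<Longrightarrow> w k = p"
  shows "k \<noteq> K_dead \<Longrightarrow> k \<noteq> K_point \<Longrightarrow> walk_sum j w k = 8 ^ j * p"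
proof (induction j arbitrary: k)
  case (Suc j)
  then show ?case by (cases k) simp_all
qed (use assms in simp)

lemma walk_sum_point:
  assumes "\<And>k. k \<noteq> K_dead \<Longrightarrow> k \<noteq> K_point \<Longrightarrow> w k = p"
  shows "4 * walk_sum j w K_point = 4 * w K_point + (4 * w K_dead + 3 * p) * kill_count j"
proof (induction j)
  case (Suc j)
  then show ?case
    using walk_sum_plane_const[OF assms] by (simp add: walk_sum_dead algebra_simps)
qed simp

lemma walk_sum_add: "walk_sum j (\<lambda>k. v k + w k) k = walk_sum j v k + walk_sum j w k"
proof (induction j arbitrary: k)
  case (Suc j)
  then show ?case by (cases k) simp_all
qed simp

lemma walk_sum_mult: "walk_sum j (\<lambda>k. a * w k) k = a * walk_sum j w k"
proof (induction j arbitrary: k)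
  case (Suc j)
  then show ?case by (cases k) (simp_all add: algebra_simps)
qed simp

text \<open>The number of states of a plane union of the given kind that share their parity with no
  other state of the union (after resetting the \<gamma>-carry).\<close>

fun isolated_count :: "kind \<Rightarrow> nat" where
  "isolated_count K_ab = 2"
| "isolated_count K_ab_ab = 1"
| "isolated_count _ = 0"

lemma walk_sum_isolated:
  "15 * walk_sum (Suc j) isolated_count K_ab_ab = 3 * 8 ^ Suc j + 2 * 3 ^ Suc j \<and>
   15 * walk_sum (Suc j) isolated_count K_ab_c = 3 * 8 ^ Suc j + 2 * 3 ^ Suc j \<and>
   5 * walk_sum (Suc j) isolated_count K_all + 3 ^ Suc j = 8 ^ Suc j \<and>
   15 * walk_sum (Suc j) isolated_count K_c + 8 * 3 ^ Suc j = 3 * 8 ^ Suc j + 15 * 4 ^ Suc j \<and>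
   15 * walk_sum (Suc j) isolated_count K_ab + 8 * 3 ^ Suc j = 3 * 8 ^ Suc j + 30 * 4 ^ Suc j"
proof (induction j)
  case (Suc j)
  define P F T where "P = (8::nat) ^ Suc j" and "F = (4::nat) ^ Suc j" and "T = (3::nat) ^ Suc j"
  have "8 ^ Suc (Suc j) = 8 * P" "4 ^ Suc (Suc j) = 4 * F" "3 ^ Suc (Suc j) = 3 * T"
    unfolding P_def F_def T_def by simp_all
  moreover note Suc[folded P_def F_def T_def]
  ultimately show ?case
    by (simp only: walk_sum.simps(2)[of "Suc j"] kind_step.simps) (simp add: algebra_simps; linarith)
qed simp

lemma walk_sum_isolated_point:
  "105 * walk_sum j isolated_count K_point + 84 * 3 ^ j + 100 = 9 * 8 ^ j + 175 * 4 ^ j"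
proof (induction j)
  case (Suc j)
  show ?case
  proof (cases j)
    case (Suc i)
    have "15 * walk_sum j isolated_count K_c + 8 * 3 ^ j = 3 * 8 ^ j + 15 * 4 ^ j"
      "15 * walk_sum j isolated_count K_ab + 8 * 3 ^ j = 3 * 8 ^ j + 30 * 4 ^ j"
      using walk_sum_isolated[of i] Suc by simp_all
    then show ?thesis
      using Suc.IH by (simp add: walk_sum_dead algebra_simps; linarith)
  qed simp
qed simp

lemma walk_sum_isolated_first_letters:
  "105 * (walk_sum j isolated_count K_point + walk_sum j isolated_count K_c + 2 * walk_sum j isolated_count K_ab)
    + 252 * 3 ^ j + 100 = 72 * 8 ^ j + 700 * 4 ^ j"
proof (cases j)
  case (Suc i)
  then show ?thesis
    using walk_sum_isolated[of i] walk_sum_isolated_point[of j] by simp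
qed simp

section \<open>Completing a low word by a high word\<close>

definition reset_c3 :: "bit3 set \<Rightarrow> bit3 set" where
  "reset_c3 S = {(c1, c2, False) | c1 c2 c3. (c1, c2, c3) \<in> S}"

definition completes :: "shape \<Rightarrow> bool \<Rightarrow> bit3 list \<Rightarrow> bool" where
  "completes a c0 wH \<longleftrightarrow> (\<exists>d1 d2. (d1, d2, c0) \<in> carries wH (reset_c3 (shape_set a)))"

text \<open>A run along the low word t0 # ts can only start in (0, 0, parity t0).\<close>

definition low_shape :: "bit3 \<Rightarrow> bit3 list \<Rightarrow> shape" where
  "low_shape t0 ts = shape_run ts (shape_step t0 (Point (False, False, parity t0)))"

lemma compatible_Cons: "compatible (t0 # ts) wH \<longleftrightarrow> completes (low_shape t0 ts) (parity t0) wH"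
proof -
  have low: "carries (t0 # ts) {(False, False, c0)} =
      (if c0 = parity t0 then shape_set (low_shape t0 ts) else {})" for c0
    using carries_shape_set[of "t0 # ts" "Point (False, False, c0)"]
    by (auto simp: low_shape_def)
  have "compatible (t0 # ts) wH \<longleftrightarrow>
      (\<exists>s\<in>reset_c3 (shape_set (low_shape t0 ts)). \<exists>d1 d2. (d1, d2, parity t0) \<in> carries wH {s})"
    unfolding compatible_def low reset_c3_def by (auto; blast)
  also have "\<dots> \<longleftrightarrow> completes (low_shape t0 ts) (parity t0) wH"
    unfolding completes_def by (subst carries_eq_UN_singleton) auto
  finally show ?thesis .
qed

lemma failures_Suc:
  "failures (Suc j) r = (\<Sum>t0\<in>UNIV. \<Sum>ts\<in>words j. \<Sum>wH\<in>words r.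
     of_bool (\<not> completes (low_shape t0 ts) (parity t0) wH))"
proof -
  have "failures (Suc j) r = card (words (Suc j) \<times> words r \<inter> {w. \<not> compatible (fst w) (snd w)})"
    unfolding failures_def by (rule arg_cong[where f = card]) blast
  also have "\<dots> = (\<Sum>w\<in>words (Suc j) \<times> words r. of_bool (\<not> compatible (fst w) (snd w)))"
    by (subst sum_of_bool_eq) simp_all
  finally have "failures (Suc j) r = (\<Sum>w\<in>words (Suc j) \<times> words r. of_bool (\<not> compatible (fst w) (snd w)))" .
  also have "\<dots> = (\<Sum>wL\<in>words (Suc j). \<Sum>wH\<in>words r. of_bool (\<not> compatible wL wH))"
    unfolding sum.cartesian_product by (simp only: split_def)
  finally show ?thesis
    by (simp only: sum_words_Suc compatible_Cons)
qed

text \<open>After a low word, a reachable point can only be the start state itself.\<close>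

definition low_form :: "shape \<Rightarrow> bool" where
  "low_form a \<longleftrightarrow> a = Dead \<or> (\<exists>c. a = Point (False, False, c)) \<or> (\<exists>q. a = Planes q)"

lemma low_form_shape_run: "low_form (shape_run us (Point (False, False, c)))"
proof (induction us)
  case (Cons u us)
  have "\<exists>q'. shape_run us (Planes q) = Planes q'" for q
    by (induction us arbitrary: q) auto
  then show ?case
    using Cons by (auto simp: low_form_def)
qed (auto simp: low_form_def)

lemma low_form_low_shape: "low_form (low_shape t0 ts)"
  unfolding low_shape_def using low_form_shape_run[of "t0 # ts" "parity t0"] by (simp only: shape_run.simps)

lemma sum_low_shapes:
  "(\<Sum>t0\<in>UNIV. \<Sum>ts\<in>words j. f (parity t0) (shape_kind (low_shape t0 ts))) =
    (\<Sum>c0\<in>UNIV. walk_sum j (f c0) K_point + walk_sum j (f c0) K_c + 2 * walk_sum j (f c0) K_ab)"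
proof -
  have "(\<Sum>t0\<in>UNIV. \<Sum>ts\<in>words j. f (parity t0) (shape_kind (low_shape t0 ts))) =
      (\<Sum>t0\<in>UNIV. walk_sum j (f (parity t0)) (shape_kind (shape_step t0 (Point (False, False, parity t0)))))"
    unfolding low_shape_def by (simp only: sum_words_shape_run)
  then show ?thesis by (simp add: sum_bit3 UNIV_bool)
qed

lemma reset_c3_empty [simp]: "reset_c3 {} = {}"
  unfolding reset_c3_def by auto

lemma reset_c3_origin: "reset_c3 {(False, False, c)} = {(False, False, False)}"
  unfolding reset_c3_def by auto

lemma c3_reset_c3: "s \<in> reset_c3 S \<Longrightarrow> \<not> snd (snd s)"
  unfolding reset_c3_def by auto

lemma mem_reset_c3_plane_union:
  "(x, y, z) \<in> reset_c3 (plane_union (q1, q2, q3)) \<longleftrightarrow> \<not> z \<and> (q1 = Some x \<or> q2 = Some y \<or> q3 \<noteq> None)"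
  unfolding reset_c3_def by auto

lemma ex_parity_reset_c3_plane_union:
  "(\<exists>s\<in>reset_c3 (plane_union q). parity s = p) \<longleftrightarrow> planes_kind q \<noteq> K_dead"
proof -
  obtain q1 q2 q3 where q: "q = (q1, q2, q3)" by (cases q)
  show ?thesis unfolding q Bex_def split_paired_Ex mem_reset_c3_plane_union
    by (cases q1; cases q2; cases q3; cases p; simp add: ex_bool_eq)
qed

lemma carry_step_reaches_iff:
  assumes "\<forall>s\<in>R. \<not> snd (snd s)"
  shows "(\<exists>d1 d2. (d1, d2, c0) \<in> carry_step u R) \<longleftrightarrow> (\<exists>s\<in>R. parity s = parity u) \<and> (snd (snd u) \<or> \<not> c0)"
proof -
  have point: "(\<exists>d1 d2. (d1, d2, c0) \<in> carry_step u {s}) \<longleftrightarrow> parity s = parity u \<and> (snd (snd u) \<or> \<not> c0)"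
    if "\<not> snd (snd s)" for s
    using that by (cases u; cases s; rename_tac a b g s1 s2 s3; case_tac a; case_tac b; case_tac g;
      case_tac s1; case_tac s2; case_tac c0) (auto simp: carry_step_singleton)
  have "(\<exists>d1 d2. (d1, d2, c0) \<in> carry_step u R) \<longleftrightarrow> (\<exists>s\<in>R. \<exists>d1 d2. (d1, d2, c0) \<in> carry_step u {s})"
    using carry_step_UN[of u "\<lambda>s. {s}" R] by auto
  then show ?thesis using point assms by auto
qed

lemma completes_single_letter:
  "completes a c0 [u] \<longleftrightarrow> (\<exists>s\<in>reset_c3 (shape_set a). parity s = parity u) \<and> (snd (snd u) \<or> \<not> c0)"
  unfolding completes_def using carry_step_reaches_iff[of "reset_c3 (shape_set a)" c0 u] c3_reset_c3
  by auto

fun failing_letters :: "bool \<Rightarrow> kind \<Rightarrow> nat" where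
  "failing_letters c0 K_dead = 8"
| "failing_letters c0 K_point = (if c0 then 6 else 4)"
| "failing_letters c0 _ = (if c0 then 4 else 0)"

lemma sum_letters_not_completes:
  assumes "low_form a"
  shows "(\<Sum>u\<in>UNIV. of_bool (\<not> completes a c0 [u]) :: nat) = failing_letters c0 (shape_kind a)"
proof -
  consider "a = Dead" | c where "a = Point (False, False, c)" | q where "a = Planes q"
    using assms unfolding low_form_def by blast
  then show ?thesis
  proof cases
    case 1
    then show ?thesis by (simp only: completes_single_letter sum_bit3) simp
  next
    case (2 c)
    then show ?thesis by (simp only: completes_single_letter sum_bit3) (cases c0; simp add: reset_c3_origin)
  next
    case (3 q)
    have "(\<exists>s\<in>reset_c3 (plane_union q). parity s) \<longleftrightarrow> planes_kind q \<noteq> K_dead"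
      "(\<exists>s\<in>reset_c3 (plane_union q). \<not> parity s) \<longleftrightarrow> planes_kind q \<noteq> K_dead"
      using ex_parity_reset_c3_plane_union[of q True] ex_parity_reset_c3_plane_union[of q False] by simp_all
    with 3 show ?thesis
      by (simp only: completes_single_letter sum_bit3) (cases "planes_kind q"; cases c0; simp)
  qed
qed

lemma failures_high_length_one: "real (failures (Suc j) 1) = 160/7 * 8 ^ j - 6/7"
proof -
  have planes: "failing_letters b k = (if b then 4 else 0)" if "k \<noteq> K_dead" "k \<noteq> K_point" for b k
    using that by (cases k) auto
  have "failures (Suc j) 1 = (\<Sum>t0\<in>UNIV. \<Sum>ts\<in>words j. failing_letters (parity t0) (shape_kind (low_shape t0 ts)))"
    unfolding failures_Suc One_nat_def sum_words_Suc words_0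
    by (simp add: sum_letters_not_completes low_form_low_shape del: sum_of_bool_eq)
  also have "\<dots> = (\<Sum>c0\<in>UNIV. walk_sum j (failing_letters c0) K_point
      + walk_sum j (failing_letters c0) K_c + 2 * walk_sum j (failing_letters c0) K_ab)"
    by (rule sum_low_shapes)
  also have "\<dots> = (\<Sum>c0\<in>UNIV. walk_sum j (failing_letters c0) K_point + 3 * 8 ^ j * (if c0 then 4 else 0))"
    using walk_sum_plane_const[OF planes] by (simp add: ac_simps)
  finally have "4 * failures (Suc j) 1 = 40 + 76 * kill_count j + 48 * 8 ^ j"
    using walk_sum_point[OF planes[where b = False], where j = j] walk_sum_point[OF planes[where b = True], where j = j]
    by (simp add: UNIV_bool algebra_simps)
  then have "4 * real (failures (Suc j) 1) = 40 + 76 * real (kill_count j) + 48 * 8 ^ j"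
    by (metis (mono_tags) of_nat_add of_nat_mult of_nat_numeral of_nat_power)
  then show ?thesis by (simp add: kill_count_real field_simps)
qed

lemma sum_words_kill: "(\<Sum>us\<in>words j. of_bool (carries us {s} = {}) :: nat) = kill_count j"
proof -
  have "(\<Sum>us\<in>words j. of_bool (carries us {s} = {}) :: nat)
      = (\<Sum>us\<in>words j. of_bool (shape_kind (shape_run us (Point s)) = K_dead))"
    using carries_shape_set[of _ "Point s"] shape_set_empty_iff by (intro sum.cong) auto
  also have "\<dots> = walk_sum j (\<lambda>k. of_bool (k = K_dead)) K_point"
    using sum_words_shape_run[where w = "\<lambda>k. of_bool (k = K_dead)" and a = "Point s"]
    by (simp del: sum_of_bool_eq)
  also have "\<dots> = kill_count j"
    using walk_sum_point[of "\<lambda>k. of_bool (k = K_dead)" 0 j] by simp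
  finally show ?thesis .
qed

fun lower_weight :: "nat \<Rightarrow> kind \<Rightarrow> nat" where
  "lower_weight r K_dead = 8 ^ r"
| "lower_weight r K_point = kill_count r"
| "lower_weight r _ = 0"

lemma lower_weight_le:
  assumes "low_form a"
  shows "lower_weight r (shape_kind a) \<le> (\<Sum>wH\<in>words r. of_bool (\<not> completes a c0 wH) :: nat)"
proof (cases "shape_kind a = K_dead")
  case True
  then have "\<not> completes a c0 wH" for wH
    using shape_set_empty_iff[of a] by (simp add: completes_def)
  then show ?thesis using True by (simp add: card_words)
next
  case False
  then consider c where "a = Point (False, False, c)" | q where "a = Planes q"
    using assms unfolding low_form_def by auto
  then show ?thesis
  proof cases
    case (1 c)
    have "(\<Sum>wH\<in>words r. of_bool (carries wH {(False, False, False)} = {}) :: nat)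
        \<le> (\<Sum>wH\<in>words r. of_bool (\<not> completes a c0 wH))"
      by (rule sum_mono) (auto simp: completes_def 1 reset_c3_origin)
    then show ?thesis using 1 by (simp add: sum_words_kill del: sum_of_bool_eq)
  next
    case (2 q)
    then show ?thesis using False by (cases "planes_kind q") simp_all
  qed
qed

lemma failures_ge: "2 * kill_count r + 2 * 8 ^ r * kill_count j \<le> failures (Suc j) r"
proof -
  have planes: "lower_weight r k = 0" if "k \<noteq> K_dead" "k \<noteq> K_point" for k
    using that by (cases k) auto
  have "2 * (walk_sum j (lower_weight r) K_point + walk_sum j (lower_weight r) K_c
      + 2 * walk_sum j (lower_weight r) K_ab) =
      (\<Sum>t0\<in>UNIV. \<Sum>ts\<in>words j. lower_weight r (shape_kind (low_shape t0 ts)))"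
    using sum_low_shapes[where f = "\<lambda>_. lower_weight r"] by (simp add: UNIV_bool)
  also have "\<dots> \<le> failures (Suc j) r"
    unfolding failures_Suc by (intro sum_mono lower_weight_le low_form_low_shape)
  finally show ?thesis
    using walk_sum_point[where w = "lower_weight r" and p = 0, OF planes, of j]
    by (simp add: UNIV_bool)
qed

definition parity_missed :: "bit3 set \<Rightarrow> bit3 \<Rightarrow> bool" where
  "parity_missed R u \<longleftrightarrow> (\<forall>s\<in>R. parity s \<noteq> parity u)"

definition isolated_in :: "bit3 set \<Rightarrow> bit3 \<Rightarrow> bool" where
  "isolated_in R u \<longleftrightarrow> u \<in> R \<and> (\<forall>s\<in>R. parity s = parity u \<longrightarrow> s = u)"

lemma sum_parity_missed:
  "(\<Sum>u\<in>UNIV. of_bool (parity_missed (reset_c3 (plane_union q)) u) :: nat) =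
    (if planes_kind q = K_dead then 8 else 0)"
proof (cases "planes_kind q = K_dead")
  case True
  then have "reset_c3 (plane_union q) = {}"
    using shape_set_empty_iff[of "Planes q"] by simp
  then show ?thesis using True by (simp add: parity_missed_def card_UNIV_bit3)
next
  case False
  then show ?thesis
    using ex_parity_reset_c3_plane_union[of q] by (simp add: parity_missed_def)
qed

lemma sum_isolated_in:
  "(\<Sum>u\<in>UNIV. of_bool (isolated_in (reset_c3 (plane_union q)) u) :: nat) = isolated_count (planes_kind q)"
proof -
  obtain q1 q2 q3 where q: "q = (q1, q2, q3)" by (cases q)
  show ?thesis unfolding q
    by (cases q1; cases q2; cases q3) (simp_all add: sum_bit3 isolated_in_def Ball_def split_paired_All
        mem_reset_c3_plane_union all_bool_eq del: sum_of_bool_eq plane_union.simps)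
qed

lemma sum_words_gamma_zero: "(\<Sum>us\<in>words j. of_bool (gamma_zero us) :: nat) = 4 ^ j"
proof (induction j)
  case (Suc j)
  have "(\<Sum>us\<in>words j. of_bool (gamma_zero (u # us)) :: nat) = of_bool (\<not> snd (snd u)) * 4 ^ j" for u
    using Suc.IH by (cases "snd (snd u)") (simp_all add: gamma_zero_def del: sum_of_bool_eq)
  then show ?case
    by (simp add: sum_words_Suc sum_bit3 del: sum_of_bool_eq)
qed (simp add: words_0 gamma_zero_def)

fun upper_weight :: "nat \<Rightarrow> kind \<Rightarrow> nat" where
  "upper_weight r K_dead = 8 ^ Suc r"
| "upper_weight r K_point = kill_count (Suc r)"
| "upper_weight r k = isolated_count k * kill_count r"

lemma not_completes_Cons_le:
  assumes "reset_c3 (shape_set a) \<noteq> {}"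
  shows "of_bool (\<not> completes a c0 (u # us)) \<le>
    of_bool (c0 \<and> gamma_zero (u # us)) + of_bool (parity_missed (reset_c3 (shape_set a)) u)
      + (of_bool (isolated_in (reset_c3 (shape_set a)) u \<and> carries us {u} = {}) :: nat)"
proof (cases "completes a c0 (u # us)")
  case False
  then have "\<forall>d1 d2. (d1, d2, c0) \<notin> carries (u # us) (reset_c3 (shape_set a))"
    unfolding completes_def by blast
  from fail_cases[OF _ this] assms c3_reset_c3
  have "c0 \<and> gamma_zero (u # us) \<or> parity_missed (reset_c3 (shape_set a)) u
      \<or> isolated_in (reset_c3 (shape_set a)) u \<and> carries us {u} = {}"
    unfolding parity_missed_def isolated_in_def by blast
  then show ?thesis by auto
qed simp

lemma sum_letters_missed_isolated:
  assumes "low_form a" "shape_kind a \<noteq> K_dead"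
  shows "(\<Sum>u\<in>UNIV. of_bool (parity_missed (reset_c3 (shape_set a)) u) * 8 ^ r
      + of_bool (isolated_in (reset_c3 (shape_set a)) u) * kill_count r) = upper_weight r (shape_kind a)"
proof -
  consider c where "a = Point (False, False, c)" | q where "a = Planes q"
    using assms unfolding low_form_def by auto
  then show ?thesis
  proof cases
    case (1 c)
    then show ?thesis
      by (simp add: reset_c3_origin parity_missed_def isolated_in_def sum_bit3 del: sum_of_bool_eq)
  next
    case (2 q)
    have "(\<Sum>u\<in>UNIV. of_bool (parity_missed (reset_c3 (plane_union q)) u) * 8 ^ r
        + of_bool (isolated_in (reset_c3 (plane_union q)) u) * kill_count r)
      = (\<Sum>u\<in>UNIV. of_bool (parity_missed (reset_c3 (plane_union q)) u)) * 8 ^ r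
        + (\<Sum>u\<in>UNIV. of_bool (isolated_in (reset_c3 (plane_union q)) u)) * kill_count r"
      by (simp add: sum.distrib sum_distrib_right del: sum_of_bool_eq)
    also have "\<dots> = isolated_count (planes_kind q) * kill_count r"
      using assms(2) 2 by (simp only: sum_parity_missed sum_isolated_in) simp
    finally show ?thesis
      using assms(2) 2 by (cases "planes_kind q") simp_all
  qed
qed

lemma sum_not_completes_le:
  assumes "low_form a"
  shows "(\<Sum>wH\<in>words (Suc r). of_bool (\<not> completes a c0 wH) :: nat)
    \<le> upper_weight r (shape_kind a) + of_bool c0 * 4 ^ Suc r"
proof (cases "shape_kind a = K_dead")
  case True
  have "(\<Sum>wH\<in>words (Suc r). of_bool (\<not> completes a c0 wH) :: nat) \<le> card (words (Suc r))"
    by (simp add: card_mono)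
  then show ?thesis using True by (simp add: card_words del: sum_of_bool_eq)
next
  case alive: False
  let ?R = "reset_c3 (shape_set a)"
  have "?R \<noteq> {}"
    using alive shape_set_empty_iff[of a] unfolding reset_c3_def by auto
  then have "(\<Sum>wH\<in>words (Suc r). of_bool (\<not> completes a c0 wH) :: nat)
    \<le> (\<Sum>u\<in>UNIV. \<Sum>us\<in>words r. of_bool (c0 \<and> gamma_zero (u # us)) + of_bool (parity_missed ?R u)
          + of_bool (isolated_in ?R u \<and> carries us {u} = {}))"
    unfolding sum_words_Suc by (intro sum_mono not_completes_Cons_le)
  also have "\<dots> = (\<Sum>wH\<in>words (Suc r). of_bool (c0 \<and> gamma_zero wH))
      + (\<Sum>u\<in>UNIV. of_bool (parity_missed ?R u) * 8 ^ r + of_bool (isolated_in ?R u) * kill_count r)"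
  proof -
    have "(\<Sum>us\<in>words r. of_bool (isolated_in ?R u \<and> carries us {u} = {}) :: nat)
        = of_bool (isolated_in ?R u) * kill_count r" for u
      by (cases "isolated_in ?R u") (simp_all add: sum_words_kill del: sum_of_bool_eq)
    then show ?thesis
      by (simp add: sum.distrib sum_words_Suc card_words del: sum_of_bool_eq)
  qed
  also have "\<dots> = of_bool c0 * 4 ^ Suc r + upper_weight r (shape_kind a)"
    using sum_words_gamma_zero[of "Suc r"] sum_letters_missed_isolated[OF assms alive]
    by (cases c0) (simp_all del: sum_of_bool_eq)
  finally show ?thesis by simp
qed

lemma walk_sum_upper_weight:
  "walk_sum j (upper_weight r) K_point + walk_sum j (upper_weight r) K_c + 2 * walk_sum j (upper_weight r) K_ab
   = 8 ^ Suc r * kill_count j + kill_count (Suc r) + kill_count r *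
       (walk_sum j isolated_count K_point + walk_sum j isolated_count K_c + 2 * walk_sum j isolated_count K_ab)"
proof -
  have "upper_weight r = (\<lambda>k. 8 ^ Suc r * of_bool (k = K_dead)
      + (kill_count (Suc r) * of_bool (k = K_point) + kill_count r * isolated_count k))"
    by (rule ext, case_tac k) simp_all
  then have walk: "walk_sum j (upper_weight r) k = 8 ^ Suc r * walk_sum j (\<lambda>k. of_bool (k = K_dead)) k
      + (kill_count (Suc r) * walk_sum j (\<lambda>k. of_bool (k = K_point)) k
         + kill_count r * walk_sum j isolated_count k)" for k
    by (simp only: walk_sum_add walk_sum_mult)
  have "walk_sum j (\<lambda>k. of_bool (k = K_dead)) K_point = kill_count j"
    "walk_sum j (\<lambda>k. of_bool (k = K_point)) K_point = 1"
    using walk_sum_point[of "\<lambda>k. of_bool (k = K_dead)" 0 j] walk_sum_point[of "\<lambda>k. of_bool (k = K_point)" 0 j]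
    by simp_all
  moreover have "walk_sum j (\<lambda>k. of_bool (k = K_dead)) k = 0" "walk_sum j (\<lambda>k. of_bool (k = K_point)) k = 0"
    if "k \<noteq> K_dead" "k \<noteq> K_point" for k
    using walk_sum_plane_const[of "\<lambda>k. of_bool (k = K_dead)" 0 k j]
      walk_sum_plane_const[of "\<lambda>k. of_bool (k = K_point)" 0 k j] that by simp_all
  ultimately show ?thesis
    unfolding walk by (simp add: algebra_simps)
qed

lemma failures_le:
  "failures (Suc j) (Suc r) \<le> 2 * (8 ^ Suc r * kill_count j + kill_count (Suc r) + kill_count r *
      (walk_sum j isolated_count K_point + walk_sum j isolated_count K_c + 2 * walk_sum j isolated_count K_ab))
    + 4 * 8 ^ j * 4 ^ Suc r"
proof -
  have "failures (Suc j) (Suc r) \<le> (\<Sum>t0\<in>UNIV. \<Sum>ts\<in>words j.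
      upper_weight r (shape_kind (low_shape t0 ts)) + of_bool (parity t0) * 4 ^ Suc r)"
    unfolding failures_Suc by (intro sum_mono sum_not_completes_le low_form_low_shape)
  also have "\<dots> = (\<Sum>t0\<in>UNIV. \<Sum>ts\<in>words j. upper_weight r (shape_kind (low_shape t0 ts)))
      + (\<Sum>t0\<in>UNIV. of_bool (parity t0) * 4 ^ Suc r * 8 ^ j)"
    by (simp add: sum.distrib card_words mult_ac del: sum_of_bool_eq)
  also have "(\<Sum>t0\<in>UNIV. of_bool (parity t0) * 4 ^ Suc r * 8 ^ j :: nat) = 4 * 8 ^ j * 4 ^ Suc r"
    by (simp only: sum_bit3) simp
  finally show ?thesis
    using sum_low_shapes[where f = "\<lambda>_. upper_weight r" and j = j] walk_sum_upper_weight[of j r]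
    by (simp add: UNIV_bool algebra_simps)
qed

lemma Nzero_1:
  assumes "n \<ge> 2"
  shows "real (Nzero n 1) = 5/14 * 8 ^ n - 6/7"
proof -
  define j where "j = n - 2"
  have n: "n = Suc (Suc j)" using assms unfolding j_def by simp
  then have "real (Nzero n 1) = 160/7 * 8 ^ j - 6/7"
    using Nzero_eq_failures[of 1 n] failures_high_length_one[of j] by simp
  then show ?thesis using n by simp
qed

lemma Nzero_ge:
  assumes "1 \<le> r" "r \<le> n - 1"
  shows "1/7 * 8 ^ n - 1/7 * 8 ^ r \<le> real (Nzero n r)"
proof -
  define j where "j = n - r - 1"
  have j: "n - r = Suc j" using assms unfolding j_def by simp
  then have "n = Suc j + r" using assms by linarith
  then have n: "(8::real) ^ n = 8 * 8 ^ j * 8 ^ r" by (simp add: power_add)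
  have "(8::real) ^ 1 \<le> 8 ^ r" using assms(1) by (intro power_increasing) simp_all
  then have "1/7 * 8 ^ n - 1/7 * 8 ^ r \<le> 1/7 * 8 ^ n - (8/7 :: real)" by simp
  also have "\<dots> = real (2 * kill_count r + 2 * 8 ^ r * kill_count j)"
    unfolding n by (simp add: kill_count_real field_simps)
  also have "\<dots> \<le> real (Nzero n r)"
    using failures_ge[of r j] Nzero_eq_failures[of r n] assms j by (intro of_nat_mono) simp
  finally show ?thesis .
qed

lemma Nzero_n_minus_1_le:
  assumes "n \<ge> 2"
  shows "real (Nzero n (n - 1)) \<le> (9/28 + 1 / 2 ^ n) * 8 ^ n - 88/7"
proof -
  define r where "r = n - 2"
  have n: "n = Suc (Suc r)" using assms unfolding r_def by simp
  have "real (Nzero n (n - 1)) \<le> real (8 * 8 ^ r + 10 * kill_count r + 4 ^ n)"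
    using failures_le[of 0 r] Nzero_eq_failures[of "n - 1" n] n by (intro of_nat_mono) simp
  also have "\<dots> = 96/7 * 8 ^ r + 4 ^ n - 40/7"
    by (simp add: kill_count_real field_simps)
  also have "\<dots> \<le> 144/7 * 8 ^ r + 4 ^ n - 88/7"
    using one_le_power[of "8::real" r] by linarith
  also have "(8::real) ^ n = 2 ^ n * 4 ^ n"
    by (simp add: power_mult_distrib[symmetric])
  then have "144/7 * 8 ^ r + 4 ^ n - 88/7 = (9/28 + 1 / 2 ^ n) * (8::real) ^ n - 88/7"
    using n by (simp add: field_simps)
  finally show ?thesis .
qed

lemma isolated_first_letters_le:
  assumes "105 * V + 252 * 3 ^ Suc i + 100 = 72 * 8 ^ Suc i + 700 * (4::real) ^ Suc i"
  shows "2 + 2 * V \<le> 1/5 * 8 ^ Suc (Suc i) + 7 * 4 ^ Suc (Suc i) - 124/5 * 3 ^ i"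
proof -
  have "(3::real) ^ i \<le> 4 ^ i" by (rule power_mono) simp_all
  moreover have "(1::real) \<le> 8 ^ i" "(0::real) \<le> 4 ^ i" by simp_all
  ultimately show ?thesis using assms unfolding power_Suc by linarith
qed

lemma Nzero_le:
  assumes "2 \<le> r" "r \<le> n - 2"
  shows "real (Nzero n r) \<le> (1/7 + 1 / 2 ^ (r + 1)) * 8 ^ n - 1/7 * 8 ^ r
    + 4/7 * (8 ^ (r - 1) - 1) * (1/5 * 8 ^ (n - r) + 7 * 4 ^ (n - r) - 124/5 * 3 ^ (n - r - 2))"
proof -
  define r0 i where "r0 = r - 1" and "i = n - r - 2"
  have r: "r = Suc r0" and nr: "n - r = Suc (Suc i)"
    using assms unfolding r0_def i_def by simp_all
  have "n = Suc (Suc i) + r" using nr assms by linarith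
  then have n: "(8::real) ^ n = 64 * 8 ^ i * 8 ^ r" by (simp add: power_add)
  define K0 W P where "K0 = real (kill_count r0)"
    and "W = walk_sum (Suc i) isolated_count K_point + walk_sum (Suc i) isolated_count K_c
      + 2 * walk_sum (Suc i) isolated_count K_ab"
    and "P = 1/5 * 8 ^ Suc (Suc i) + 7 * 4 ^ Suc (Suc i) - 124/5 * (3::real) ^ i"
  have "real (Nzero n r) \<le> real (2 * (8 ^ r * kill_count (Suc i) + kill_count r + kill_count r0 * W)
      + 4 * 8 ^ Suc i * 4 ^ r)"
    using failures_le[of "Suc i" r0] Nzero_eq_failures[of r n] assms r nr unfolding W_def
    by (intro of_nat_mono) simp
  then have bound: "real (Nzero n r) \<le> 1/7 * 8 ^ n - 8/7 + 2 * (K0 * real W) + 4 * 8 ^ Suc i * 4 ^ r"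
    unfolding n K0_def by (simp add: kill_count_real field_simps)
  have "105 * real W + 252 * 3 ^ Suc i + 100 = 72 * 8 ^ Suc i + 700 * (4::real) ^ Suc i"
    using arg_cong[OF walk_sum_isolated_first_letters[of "Suc i"], of real, folded W_def] by simp
  then have "K0 * (2 + 2 * real W) \<le> K0 * P"
    unfolding P_def K0_def by (intro mult_left_mono isolated_first_letters_le) simp_all
  moreover have "2 * K0 = 1/7 * 8 ^ r - 8/7"
    unfolding K0_def kill_count_real r by simp
  moreover have "(1/7 + 1 / 2 ^ (r + 1)) * (8::real) ^ n = 1/7 * 8 ^ n + 4 * 8 ^ Suc i * 4 ^ r"
  proof -
    have "(8::real) ^ r = 2 ^ r * 4 ^ r" by (simp add: power_mult_distrib[symmetric])
    then show ?thesis unfolding n by (simp add: field_simps)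
  qed
  moreover have "4/7 * (8 ^ (r - 1) - 1) * (1/5 * 8 ^ (n - r) + 7 * 4 ^ (n - r) - 124/5 * 3 ^ (n - r - 2))
      = K0 * P"
    unfolding K0_def P_def kill_count_real nr using r by simp
  ultimately show ?thesis
    using bound by (simp add: algebra_simps)
qed

theorem corollary5:
  fixes n :: nat
  assumes "n \<ge> 2"
  shows "(\<forall>r. 2 \<le> r \<and> r \<le> n - 2 \<longrightarrow>
            real (Nzero n r) \<le> (1/7 + 1 / 2 ^ (r + 1)) * 8 ^ n - (1/7) * 8 ^ r
              + (4/7) * (8 ^ (r - 1) - 1) *
                ((1/5) * 8 ^ (n - r) + 7 * 4 ^ (n - r) - (124/5) * 3 ^ (n - r - 2)))
       \<and> real (Nzero n (n - 1)) \<le> (9/28 + 1 / 2 ^ n) * 8 ^ n - 88/7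
       \<and> (\<forall>r. 1 \<le> r \<and> r \<le> n - 1 \<longrightarrow> real (Nzero n r) \<ge> (1/7) * 8 ^ n - (1/7) * 8 ^ r)
       \<and> real (Nzero n 1) = (5/14) * 8 ^ n - 6/7"
  using Nzero_le Nzero_n_minus_1_le[OF assms] Nzero_ge Nzero_1[OF assms] by auto

end
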